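(* Let $n\ge 2k\ge 4$ with $n$ even, let $1\le i<j\le k$, and let $\lambda,\nu$ be dominant integral $\mathfrak{gl}(k)$-weights with $\nu=\lambda_{(ij)}$. Fix a sign $\pm$ and consider the irreducible $\mathrm P$-modules $\mathrm V_\lambda\otimes\mathbb S_\pm$ and $\mathrm V_\nu\otimes\mathbb S_\pm$. Suppose that the highest weights of their dual modules either both lie on the affine Weyl orbit of $\frac12(1-n,\ldots,1-n\,|\,1,\ldots,1)$ or both lie on the affine Weyl orbit of $\frac12(1-n,\ldots,1-n\,|\,1,\ldots,1,-1)$. Then $c(\mathrm V_\lambda\otimes\mathbb S_\pm)=c(\mathrm V_\nu\otimes\mathbb S_\pm)$, i.e. $\alpha_{ij}:=c(\mathrm V_\lambda\otimes\mathbb S_\pm)-c(\mathrm V_{\lambda_{(ij)}}\otimes\mathbb S_\pm)=0$.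
   Context: Setting: $\mathfrak g=\mathfrak{so}(n+k,k)$, $\mathrm G$ a covering group of the identity component of $\mathrm{SO}(n+k,k)$, $\mathrm P$ the parabolic subgroup stabilizing a maximal isotropic $k$-plane, with Levi factor $\mathrm G_0$, $\mathfrak g_0\cong\mathfrak{gl}(k,\mathbb R)\oplus\mathfrak{so}(n)$, $\mathfrak p=\mathfrak g_0\oplus\mathfrak p_+$. Irreducible $\mathrm G_0$-modules are regarded as $\mathrm P$-modules with $\mathfrak p_+$ acting trivially; all modules are complexified. Weights of $\mathfrak g_{\mathbb C}=\mathfrak{so}(n+2k,\mathbb C)$ (with a Cartan subalgebra contained in $\mathfrak g_0$) are written $(a_1,\ldots,a_k\,|\,b_1,\ldots,b_{n/2})$, the first block being the $\mathfrak{gl}(k)$-coordinates $\epsilon_1,\ldots,\epsilon_k$ and the second standard $\mathfrak{so}(n)$-coordinates; positive roots are $e_a\pm e_b$, $a<b$, in the combined coordinates, and $\rho=(N-1,N-2,\ldots,1,0)$ with $N=k+n/2$ is the half-sum of positive roots. The affine action of the Weyl group is $w\cdot\mu=w(\mu+\rho)-\rho$. For a $\mathfrak{gl}(k)$-weight $\lambda=(\lambda_1,\ldots,\lambda_k)$ (dominant integral: $\lambda_a-\lambda_b\in\mathbb Z_{\ge0}$ for $a<b$), $\mathrm V_\lambda$ is the irreducible $\mathfrak{gl}(k)$-module with highest weight $\lambda$, the identity acting by $\sum\lambda_a$; $\lambda_{(ij)}$ is $\lambda$ with $\lambda_i,\lambda_j$ each increased by $1$. $\mathbb S_\pm$ are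 the half-spin modules of $\mathfrak{so}(n)$. For an irreducible $\mathrm P$-module $\mathrm W$ of this type, $c(\mathrm W):=\langle\mu,\mu+2\rho\rangle$, where $\mu$ is the highest weight of the dual module $\mathrm W^*$ (the negative of the lowest weight of $\mathrm W$) and $\langle\cdot,\cdot\rangle$ is the inner product on weights induced by the Killing form; this is the scalar by which the curved Casimir operator acts on sections of the associated bundle. *)

theory Defs
  imports Complex_Main "HOL-Combinatorics.Permutations"
begin

(* Weights of so(n+2k,C) = D_N, N = k + n/2, are real lists of length N:
   (a_1,...,a_k | b_1,...,b_{n/2}). *)

definition vadd :: "real list \<Rightarrow> real list \<Rightarrow> real list" where
  "vadd x y = map2 (+) x y"

definition vsub :: "real list \<Rightarrow> real list \<Rightarrow> real list" where
  "vsub x y = map2 (-) x y"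

definition vscale :: "real \<Rightarrow> real list \<Rightarrow> real list" where
  "vscale c x = map (\<lambda>t. c * t) x"

(* inner product on weights induced by the Killing form; for D_N the Killing form
   induces a positive multiple of the standard inner product, we use the standard one *)
definition ip :: "real list \<Rightarrow> real list \<Rightarrow> real" where
  "ip x y = (\<Sum>a<length x. x ! a * y ! a)"

definition rho :: "nat \<Rightarrow> real list" where
  "rho N = map (\<lambda>a. real (N - 1 - a)) [0..<N]"

definition weyl_act :: "(nat \<Rightarrow> nat) \<Rightarrow> (nat \<Rightarrow> bool) \<Rightarrow> real list \<Rightarrow> real list" where
  "weyl_act \<sigma> s x = map (\<lambda>a. (if s a then -1 else 1) * x ! \<sigma> a) [0..<length x]"

definition weyl_D :: "nat \<Rightarrow> ((nat \<Rightarrow> nat) \<times> (nat \<Rightarrow> bool)) set" where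
  "weyl_D N = {(\<sigma>, s). \<sigma> permutes {..<N} \<and> even (card {a. a < N \<and> s a})}"

definition dot_act :: "nat \<Rightarrow> (nat \<Rightarrow> nat) \<Rightarrow> (nat \<Rightarrow> bool) \<Rightarrow> real list \<Rightarrow> real list" where
  "dot_act N \<sigma> s x = vsub (weyl_act \<sigma> s (vadd x (rho N))) (rho N)"

definition affine_orbit :: "nat \<Rightarrow> real list \<Rightarrow> real list set" where
  "affine_orbit N x = {dot_act N \<sigma> s x | \<sigma> s. (\<sigma>, s) \<in> weyl_D N}"

definition dominant_integral :: "real list \<Rightarrow> bool" where
  "dominant_integral lam \<longleftrightarrow> (\<forall>a b. a < b \<and> b < length lam \<longrightarrow> lam ! a - lam ! b \<in> \<nat>)"

(* lambda_(ij): lambda_i and lambda_j increased by 1 (indices 1-based) *)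
definition lam_ij :: "real list \<Rightarrow> nat \<Rightarrow> nat \<Rightarrow> real list" where
  "lam_ij lam i j = lam[i - 1 := lam ! (i - 1) + 1, j - 1 := lam ! (j - 1) + 1]"

(* lowest weight of V_lambda: w_0 lambda = (lambda_k, ..., lambda_1) *)
definition lowest_gl :: "real list \<Rightarrow> real list" where
  "lowest_gl lam = rev lam"

(* highest weights of half-spin modules of so(n), m = n/2:
   S_+ : (1/2,...,1/2),  S_- : (1/2,...,1/2,-1/2);  pos = True means S_+ *)
definition highest_spin :: "nat \<Rightarrow> bool \<Rightarrow> real list" where
  "highest_spin n pos = replicate (n div 2 - 1) (1/2) @ [if pos then 1/2 else -1/2]"

(* lowest weight = w_0 (highest weight); w_0 = -1 if m even, and
   -1 composed with the sign change of the last coordinate if m odd *)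
definition lowest_spin :: "nat \<Rightarrow> bool \<Rightarrow> real list" where
  "lowest_spin n pos =
     (let h = highest_spin n pos; m = n div 2 in
      if even m then map uminus h
      else map uminus (butlast h) @ [last h])"

definition lowest_wt :: "nat \<Rightarrow> real list \<Rightarrow> bool \<Rightarrow> real list" where
  "lowest_wt n lam pos = lowest_gl lam @ lowest_spin n pos"

(* highest weight of the dual module = - lowest weight *)
definition dual_hw :: "nat \<Rightarrow> real list \<Rightarrow> bool \<Rightarrow> real list" where
  "dual_hw n lam pos = map uminus (lowest_wt n lam pos)"

definition casimir_c :: "nat \<Rightarrow> real list \<Rightarrow> bool \<Rightarrow> real" where
  "casimir_c n lam pos =
     (let \<mu> = dual_hw n lam pos; N = length lam + n div 2 in
      ip \<mu> (vadd \<mu> (vscale 2 (rho N))))"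

definition base1 :: "nat \<Rightarrow> nat \<Rightarrow> real list" where
  "base1 k n = replicate k ((1 - real n) / 2) @ replicate (n div 2) (1/2)"

definition base2 :: "nat \<Rightarrow> nat \<Rightarrow> real list" where
  "base2 k n = replicate k ((1 - real n) / 2) @ replicate (n div 2 - 1) (1/2) @ [-1/2]"

end

theory Submission
  imports Defs
begin

text \<open>Completing the square, \<open>\<langle>\<mu>, \<mu> + 2\<rho>\<rangle> = |\<mu> + \<rho>|\<^sup>2 - |\<rho>|\<^sup>2\<close>, and the Weyl group acts
  on weights by signed permutations of coordinates, hence isometrically. So \<open>\<mu> \<mapsto> \<langle>\<mu>, \<mu> + 2\<rho>\<rangle>\<close>
  is constant on every affine Weyl orbit, and the two dual highest weights, lying on a common
  orbit, give the same Casimir value.\<close>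

definition casimir_form :: "nat \<Rightarrow> real list \<Rightarrow> real" where
  "casimir_form N \<mu> = ip \<mu> (vadd \<mu> (vscale 2 (rho N)))"

lemma length_rho [simp]: "length (rho N) = N"
  by (simp add: rho_def)

lemma length_dot_act [simp]: "length x = N \<Longrightarrow> length (dot_act N \<sigma> s x) = N"
  by (simp add: dot_act_def vsub_def vadd_def weyl_act_def)

lemma casimir_form_eq_norm_shift:
  assumes "length \<mu> = N"
  shows "casimir_form N \<mu> = ip (vadd \<mu> (rho N)) (vadd \<mu> (rho N)) - ip (rho N) (rho N)"
  unfolding casimir_form_def ip_def vadd_def vscale_def
  using assms by (simp add: sum_subtractf[symmetric] algebra_simps)

lemma ip_weyl_act_self:
  assumes "\<sigma> permutes {..<length x}"
  shows "ip (weyl_act \<sigma> s x) (weyl_act \<sigma> s x) = ip x x"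
proof -
  have "ip (weyl_act \<sigma> s x) (weyl_act \<sigma> s x) = (\<Sum>a<length x. x ! \<sigma> a * x ! \<sigma> a)"
    unfolding ip_def weyl_act_def by (intro sum.cong) auto
  also have "\<dots> = ip x x"
    using sum.permute[OF assms, of "\<lambda>a. x ! a * x ! a"] by (simp add: ip_def comp_def)
  finally show ?thesis .
qed

lemma casimir_form_dot_act:
  assumes "length x = N" and "\<sigma> permutes {..<N}"
  shows "casimir_form N (dot_act N \<sigma> s x) = casimir_form N x"
proof -
  have shift: "vadd (dot_act N \<sigma> s x) (rho N) = weyl_act \<sigma> s (vadd x (rho N))"
    using assms(1)
    by (intro nth_equalityI) (simp_all add: dot_act_def vsub_def vadd_def weyl_act_def)
  have "length (vadd x (rho N)) = N"
    using assms(1) by (simp add: vadd_def)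
  then show ?thesis
    using assms by (simp add: casimir_form_eq_norm_shift shift ip_weyl_act_self)
qed

lemma casimir_form_affine_orbit:
  assumes "length x = N" and "\<mu> \<in> affine_orbit N x"
  shows "casimir_form N \<mu> = casimir_form N x"
  using assms casimir_form_dot_act
  by (auto simp: affine_orbit_def weyl_D_def)

lemma casimir_form_eq_if_same_orbit:
  assumes "length x = N" and "\<mu> \<in> affine_orbit N x" and "\<mu>' \<in> affine_orbit N x"
  shows "casimir_form N \<mu> = casimir_form N \<mu>'"
  using assms casimir_form_affine_orbit by metis

lemma casimir_c_eq_casimir_form: "casimir_c n lam pos = casimir_form (length lam + n div 2) (dual_hw n lam pos)"
  by (simp add: casimir_c_def casimir_form_def Let_def)

theorem theorem4:
  fixes n k i j :: nat and lam nu :: "real list" and pos :: bool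
  assumes "even n" and "4 \<le> 2 * k" and "2 * k \<le> n"
    and "1 \<le> i" and "i < j" and "j \<le> k"
    and "length lam = k"
    and "dominant_integral lam" and "dominant_integral nu"
    and "nu = lam_ij lam i j"
    and "(dual_hw n lam pos \<in> affine_orbit (k + n div 2) (base1 k n) \<and>
          dual_hw n nu pos \<in> affine_orbit (k + n div 2) (base1 k n)) \<or>
         (dual_hw n lam pos \<in> affine_orbit (k + n div 2) (base2 k n) \<and>
          dual_hw n nu pos \<in> affine_orbit (k + n div 2) (base2 k n))"
  shows "casimir_c n lam pos = casimir_c n nu pos"
proof -
  have "n div 2 \<ge> 1"
    using assms(2,3) by linarith
  then have len_base: "length (base1 k n) = k + n div 2" "length (base2 k n) = k + n div 2"
    by (simp_all add: base1_def base2_def)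
  have "length nu = k"
    using assms(7,10) by (simp add: lam_ij_def)
  then have "casimir_c n nu pos = casimir_form (k + n div 2) (dual_hw n nu pos)"
    by (simp add: casimir_c_eq_casimir_form)
  moreover have "casimir_c n lam pos = casimir_form (k + n div 2) (dual_hw n lam pos)"
    using assms(7) by (simp add: casimir_c_eq_casimir_form)
  ultimately show ?thesis
    using assms(11) casimir_form_eq_if_same_orbit[OF len_base(1)]
      casimir_form_eq_if_same_orbit[OF len_base(2)]
    by metis
qed

end
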